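(* Let $X=\{0,1\}$ and $c\geq1$. Let $\widetilde K_{1,00}(c)$ be the set of all $w\in X^c$ such that the sequence $(1,00,w)$ is not a code, and let $J_{1,00}(c)$ be the set of all words $w\in X^c$ of the form $w=1^{i_1}(00)^{j_1}1^{i_2}(00)^{j_2}\cdots1^{i_k}(00)^{j_k}$ for some $k\geq1$ and integers $i_l,j_l\geq0$. Then $\widetilde K_{1,00}(c)=J_{1,00}(c)\cup\{0^c\}$, and $$|\widetilde K_{1,00}(c)|=F_{c+1}+(c)_2,$$ where $F_k$ is the $k$-th Fibonacci number ($F_0=0$, $F_1=1$, $F_{k}=F_{k-1}+F_{k-2}$) and $(c)_2\in\{0,1\}$ is the remainder of $c$ modulo $2$.
   Context: For a letter or word $u$, $u^i$ denotes the concatenation of $i$ copies of $u$ ($u^0$ is the empty word). A code over $X$ is a finite sequence $C=(v_1,\ldots,v_m)$ of words over $X$ such that every $w\in X^*$ has at most one factorization into code-words: if $w=v_{i_1}\cdots v_{i_l}=v_{j_1}\cdots v_{j_{l'}}$ with $l,l'\geq1$, then $l=l'$ and $i_t=j_t$ for all $t$. *)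

theory Defs
  imports "HOL-Number_Theory.Fib"
begin

text \<open>Words over the alphabet X = {0,1} are lists of naturals with entries in {0,1}.
A code is a finite sequence (list) of words; factorizations are sequences of indices.\<close>

type_synonym word = "nat list"

definition binword :: "word \<Rightarrow> bool" where
  "binword w \<longleftrightarrow> set w \<subseteq> {0, 1}"

definition is_code :: "word list \<Rightarrow> bool" where
  "is_code C \<longleftrightarrow>
     (\<forall>is js. is \<noteq> [] \<longrightarrow> js \<noteq> [] \<longrightarrow>
        set is \<subseteq> {..<length C} \<longrightarrow> set js \<subseteq> {..<length C} \<longrightarrow>
        concat (map ((!) C) is) = concat (map ((!) C) js) \<longrightarrow> is = js)"

definition K_tilde :: "nat \<Rightarrow> word set" where
  "K_tilde c = {w. binword w \<and> length w = c \<and> \<not> is_code [[1], [0,0], w]}"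

definition J_set :: "nat \<Rightarrow> word set" where
  "J_set c = {w. binword w \<and> length w = c \<and>
     (\<exists>k\<ge>1. \<exists>i j :: nat \<Rightarrow> nat.
        w = concat (map (\<lambda>l. replicate (i l) 1 @ concat (replicate (j l) [0,0])) [0..<k]))}"

end

theory Submission imports Defs begin

text \<open>
  Write \<open>P\<close> for the submonoid \<open>{1, 00}\<^sup>*\<close>; its words of length \<open>c\<close> form \<open>J_set c\<close>.
  If \<open>w \<in> P\<close>, then \<open>w\<close> itself has a second factorization over \<open>{1, 00}\<close>, and if
  \<open>w = 0\<^sup>c\<close> then \<open>w w = (00)\<^sup>c\<close>; so such \<open>w\<close> spoil the code property. Every other binary
  word is \<open>v01r\<close> or \<open>v0\<close> with \<open>v \<in> P\<close> and, in the second case, a letter \<open>1\<close> in \<open>v\<close>.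
  A word \<open>s01y\<close> with \<open>s \<in> P\<close> determines \<open>s\<close>, so in the first case the first occurrence
  of \<open>w\<close> in a factorization is pinned down and factorizations are unique; reversal reduces
  the second case to the first. Counting \<open>P\<close> by its first factor gives the Fibonacci
  recursion, and \<open>0\<^sup>c \<in> P\<close> iff \<open>c\<close> is even.
\<close>

inductive in_1_00_star :: "word \<Rightarrow> bool" where
  nil: "in_1_00_star []"
| one: "in_1_00_star s \<Longrightarrow> in_1_00_star (1 # s)"
| double_zero: "in_1_00_star s \<Longrightarrow> in_1_00_star (0 # 0 # s)"

inductive_simps in_1_00_star_Cons: "in_1_00_star (x # s)"

lemma in_1_00_star_simps [simp]:
  "in_1_00_star []"
  "in_1_00_star (Suc 0 # s) \<longleftrightarrow> in_1_00_star s"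
  "in_1_00_star (0 # 0 # s) \<longleftrightarrow> in_1_00_star s"
  "\<not> in_1_00_star [0]"
  "\<not> in_1_00_star (0 # Suc 0 # s)"
  by (simp_all add: in_1_00_star_Cons in_1_00_star.nil)

lemma in_1_00_star_append:
  "in_1_00_star s \<Longrightarrow> in_1_00_star t \<Longrightarrow> in_1_00_star (s @ t)"
  by (induction s rule: in_1_00_star.induct) simp_all

lemma in_1_00_star_concat: "\<forall>s\<in>set ss. in_1_00_star s \<Longrightarrow> in_1_00_star (concat ss)"
  by (induction ss) (simp_all add: in_1_00_star_append)

lemma in_1_00_star_append_iff:
  "in_1_00_star s \<Longrightarrow> in_1_00_star (s @ t) \<longleftrightarrow> in_1_00_star t"
  by (induction s rule: in_1_00_star.induct) simp_all

lemma in_1_00_star_rev: "in_1_00_star s \<Longrightarrow> in_1_00_star (rev s)"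
  by (induction s rule: in_1_00_star.induct) (simp_all add: in_1_00_star_append)

lemma in_1_00_star_binword: "in_1_00_star s \<Longrightarrow> binword s"
  by (induction s rule: in_1_00_star.induct) (auto simp: binword_def)

lemma in_1_00_star_replicate_zero_iff: "in_1_00_star (replicate n 0) \<longleftrightarrow> even n"
  by (induction n rule: nat_induct2) simp_all

lemma in_1_00_star_first_one:
  "in_1_00_star s \<Longrightarrow> 1 \<in> set s \<Longrightarrow> \<exists>k t. s = replicate (2 * k) 0 @ 1 # t"
proof (induction s rule: in_1_00_star.induct)
  case (one s)
  show ?case by (rule exI[of _ 0]) simp
next
  case (double_zero s)
  then obtain k t where "s = replicate (2 * k) 0 @ 1 # t" by auto
  then show ?case by (intro exI[of _ "Suc k"] exI[of _ t]) simp
qed simp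

lemma in_1_00_star_prefix_01:
  "in_1_00_star t \<Longrightarrow> t @ 0 # 1 # y = 0 # 1 # z \<Longrightarrow> t = []"
  by (cases rule: in_1_00_star.cases) auto

lemma in_1_00_star_before_01_unique:
  assumes s: "in_1_00_star s" and s': "in_1_00_star s'"
    and eq: "s @ 0 # 1 # y = s' @ 0 # 1 # y'"
  shows "s = s'"
proof -
  obtain us where "s = s' @ us \<and> us @ 0 # 1 # y = 0 # 1 # y'
                 \<or> s' = s @ us \<and> us @ 0 # 1 # y' = 0 # 1 # y"
    using eq unfolding append_eq_append_conv2 by metis
  moreover have "in_1_00_star us" if "s = s' @ us \<or> s' = s @ us"
    using that s s' in_1_00_star_append_iff by blast
  ultimately show ?thesis using in_1_00_star_prefix_01 by fastforce
qed

lemma binword_cases_1_00: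
  "binword w \<Longrightarrow>
     in_1_00_star w \<or> (\<exists>v r. in_1_00_star v \<and> (w = v @ [0] \<or> w = v @ 0 # 1 # r))"
proof (induction w rule: induct_list012)
  case (2 x)
  then show ?case by (auto simp: binword_def intro: exI[of _ "[]"])
next
  case (3 x y zs)
  then have bin: "binword (y # zs)" "binword zs" and "x \<in> {0, 1}" "y \<in> {0, 1}"
    by (auto simp: binword_def)
  then consider "x = 1" | "x = 0" "y = 1" | "x = 0" "y = 0" by auto
  then show ?case
  proof cases
    case 1
    with "3.IH"(2)[OF bin(1)] show ?thesis
      by (metis append_Cons in_1_00_star.one)
  next
    case 2
    then show ?thesis by (intro disjI2 exI[of _ "[]"] exI[of _ zs]) simp
  next
    case 3
    with "3.IH"(1)[OF bin(2)] show ?thesis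
      by (metis append_Cons in_1_00_star.double_zero)
  qed
qed simp

abbreviation encode :: "word list \<Rightarrow> nat list \<Rightarrow> word" where
  "encode C is \<equiv> concat (map ((!) C) is)"

lemma in_1_00_star_encode:
  "set is \<subseteq> {0, 1} \<Longrightarrow> in_1_00_star (encode [[1], [0, 0], w] is)"
  by (induction "is") auto

lemma in_1_00_star_imp_encode:
  "in_1_00_star x \<Longrightarrow> \<exists>is. set is \<subseteq> {0, 1} \<and> encode [[1], [0, 0], w] is = x"
proof (induction x rule: in_1_00_star.induct)
  case nil
  show ?case by (rule exI[of _ "[]"]) simp
next
  case (one s)
  then obtain "is" where "set is \<subseteq> {0, 1}" "encode [[1], [0, 0], w] is = s" by blast
  then show ?case by (intro exI[of _ "0 # is"]) simp
next
  case (double_zero s)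
  then obtain "is" where "set is \<subseteq> {0, 1}" "encode [[1], [0, 0], w] is = s" by blast
  then show ?case by (intro exI[of _ "1 # is"]) simp
qed

lemma encode_1_00_inj:
  "set is \<subseteq> {0, 1} \<Longrightarrow> set js \<subseteq> {0, 1} \<Longrightarrow>
     encode [[1], [0, 0], w] is = encode [[1], [0, 0], w] js \<Longrightarrow> is = js"
proof (induction "is" arbitrary: js)
  case Nil
  then show ?case by (cases js) auto
next
  case (Cons p "is")
  then show ?case by (cases js) auto
qed

lemma is_code_if_01_after_prefix:
  assumes w: "w = v @ 0 # 1 # r" and v: "in_1_00_star v"
  shows "is_code [[1], [0, 0], w]"
proof -
  let ?C = "[[1], [0, 0], w]"
  have indices_01: "set U \<subseteq> {0, 1}" if "set U \<subseteq> {..<3}" "2 \<notin> set U" for U :: "nat list"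
    using that by (auto simp: subset_iff numeral_eq_Suc less_Suc_eq)
  have split_at_first_w: "\<exists>U1 U2. U = U1 @ 2 # U2 \<and> set U1 \<subseteq> {0, 1} \<and>
      encode ?C U = (encode ?C U1 @ v) @ 0 # 1 # r @ encode ?C U2"
    if "set U \<subseteq> {..<3}" "2 \<in> set U" for U
  proof -
    obtain U1 U2 where "U = U1 @ 2 # U2" "2 \<notin> set U1"
      using split_list_first[OF \<open>2 \<in> set U\<close>] by blast
    moreover from this have "set U1 \<subseteq> {0, 1}" using that(1) indices_01 by simp
    ultimately show ?thesis using w by auto
  qed
  have contains_w_iff: "2 \<in> set U \<longleftrightarrow> \<not> in_1_00_star (encode ?C U)"
    if "set U \<subseteq> {..<3}" for U
  proof
    assume "2 \<in> set U"
    with split_at_first_w[OF that] obtain U1 U2 where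
      "set U1 \<subseteq> {0, 1}" "encode ?C U = (encode ?C U1 @ v) @ 0 # 1 # r @ encode ?C U2"
      by blast
    then show "\<not> in_1_00_star (encode ?C U)"
      using in_1_00_star_append_iff in_1_00_star_append in_1_00_star_encode v by fastforce
  next
    assume "\<not> in_1_00_star (encode ?C U)"
    then show "2 \<in> set U"
      using in_1_00_star_encode indices_01 that by blast
  qed
  have "is = js"
    if "set is \<subseteq> {..<3}" "set js \<subseteq> {..<3}" "encode ?C is = encode ?C js" for "is" js
    using that
  proof (induction "is" arbitrary: js rule: length_induct)
    case (1 "is")
    show ?case
    proof (cases "2 \<in> set is")
      case False
      then have "2 \<notin> set js" using contains_w_iff "1.prems" by metis
      with False "1.prems" show ?thesis
        using encode_1_00_inj indices_01 by blast
    next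
      case True
      then have "2 \<in> set js" using contains_w_iff "1.prems" by metis
      obtain U1 U2 where is_split: "is = U1 @ 2 # U2" "set U1 \<subseteq> {0, 1}"
        "encode ?C is = (encode ?C U1 @ v) @ 0 # 1 # r @ encode ?C U2"
        using split_at_first_w[OF "1.prems"(1) True] by blast
      obtain U1' U2' where js_split: "js = U1' @ 2 # U2'" "set U1' \<subseteq> {0, 1}"
        "encode ?C js = (encode ?C U1' @ v) @ 0 # 1 # r @ encode ?C U2'"
        using split_at_first_w[OF "1.prems"(2) \<open>2 \<in> set js\<close>] by blast
      have "encode ?C U1 @ v = encode ?C U1' @ v"
        using in_1_00_star_before_01_unique is_split(2,3) js_split(2,3) "1.prems"(3)
          in_1_00_star_append in_1_00_star_encode v by metis
      then have "U1 = U1'" using encode_1_00_inj is_split(2) js_split(2) by blast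
      moreover have "U2 = U2'"
      proof -
        have "encode ?C U2 = encode ?C U2'" using is_split(3) js_split(3) "1.prems"(3) \<open>U1 = U1'\<close> by simp
        moreover have "set U2 \<subseteq> {..<3}" "set U2' \<subseteq> {..<3}" using is_split(1) js_split(1) "1.prems" by auto
        ultimately show ?thesis using "1.IH" is_split(1) by auto
      qed
      ultimately show ?thesis using is_split(1) js_split(1) by simp
    qed
  qed
  then show ?thesis unfolding is_code_def by (simp add: numeral_3_eq_3)
qed

lemma encode_map_rev:
  "set is \<subseteq> {..<length C} \<Longrightarrow> encode (map rev C) (rev is) = rev (encode C is)"
  by (induction "is") auto

lemma is_code_if_is_code_map_rev:
  assumes "is_code (map rev C)"
  shows "is_code C"
  unfolding is_code_def
proof (intro allI impI)
  fix "is" js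
  assume "is \<noteq> []" "js \<noteq> []" "set is \<subseteq> {..<length C}" "set js \<subseteq> {..<length C}"
    "encode C is = encode C js"
  then have "rev is = rev js"
    using assms encode_map_rev unfolding is_code_def by (metis length_map rev_is_Nil_conv set_rev)
  then show "is = js" by simp
qed

lemma is_code_if_0_after_prefix:
  assumes w: "w = v @ [0]" and v: "in_1_00_star v" "1 \<in> set v"
  shows "is_code [[1], [0, 0], w]"
proof -
  obtain k t where "rev v = replicate (2 * k) 0 @ 1 # t"
    using in_1_00_star_first_one in_1_00_star_rev v by fastforce
  then have "map rev [[1], [0, 0], w] = [[1], [0, 0], replicate (2 * k) 0 @ 0 # 1 # t]"
    using w by (simp add: replicate_append_same)
  moreover have "in_1_00_star (replicate (2 * k) 0)"
    by (simp add: in_1_00_star_replicate_zero_iff)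
  ultimately show ?thesis
    using is_code_if_01_after_prefix is_code_if_is_code_map_rev by metis
qed

lemma not_is_code_if_two_factorizations:
  "is \<noteq> js \<Longrightarrow> is \<noteq> [] \<Longrightarrow> js \<noteq> [] \<Longrightarrow> set is \<subseteq> {..<length C} \<Longrightarrow>
     set js \<subseteq> {..<length C} \<Longrightarrow> encode C is = encode C js \<Longrightarrow> \<not> is_code C"
  unfolding is_code_def by blast

lemma not_is_code_1_00_iff:
  assumes "binword w" "w \<noteq> []"
  shows "\<not> is_code [[1], [0, 0], w] \<longleftrightarrow> in_1_00_star w \<or> w = replicate (length w) 0"
proof
  assume not_code: "\<not> is_code [[1], [0, 0], w]"
  show "in_1_00_star w \<or> w = replicate (length w) 0"
  proof (rule ccontr)
    assume contra: "\<not> ?thesis"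
    then obtain v r where v: "in_1_00_star v" and "w = v @ [0] \<or> w = v @ 0 # 1 # r"
      using binword_cases_1_00[OF assms(1)] by blast
    then consider "w = v @ [0]" "1 \<in> set v" | "w = v @ [0]" "1 \<notin> set v" | "w = v @ 0 # 1 # r"
      by blast
    then show False
    proof cases
      case 2
      then have "\<forall>x\<in>set w. x = 0" using assms(1) by (auto simp: binword_def)
      then show False using contra replicate_length_same[of w 0] by simp
    qed (use not_code v is_code_if_0_after_prefix is_code_if_01_after_prefix in blast)+
  qed
next
  assume "in_1_00_star w \<or> w = replicate (length w) 0"
  then show "\<not> is_code [[1], [0, 0], w]"
  proof
    assume "in_1_00_star w"
    then obtain "is" where "set is \<subseteq> {0, 1}" "encode [[1], [0, 0], w] is = w"
      using in_1_00_star_imp_encode by blast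
    with \<open>w \<noteq> []\<close> show ?thesis
      by (intro not_is_code_if_two_factorizations[of "is" "[2]"]) auto
  next
    assume zeros: "w = replicate (length w) 0"
    have "encode [[1], [0, 0], w] (replicate n 1) = replicate (2 * n) 0" for n
      by (induction n) simp_all
    moreover have "encode [[1], [0, 0], w] [2, 2] = w @ w"
      by (simp add: numeral_2_eq_2)
    moreover have "w @ w = replicate (2 * length w) 0"
      by (metis zeros mult_2 replicate_add)
    ultimately show ?thesis using \<open>w \<noteq> []\<close>
      by (intro not_is_code_if_two_factorizations[of "[2, 2]" "replicate (length w) 1"])
        (auto dest: arg_cong[of _ _ set])
  qed
qed

definition words_1_00 :: "nat \<Rightarrow> word set" where
  "words_1_00 n = {w. in_1_00_star w \<and> length w = n}"

lemma in_1_00_star_iff_blocks: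
  "in_1_00_star w \<longleftrightarrow> (\<exists>k\<ge>1. \<exists>i j :: nat \<Rightarrow> nat.
     w = concat (map (\<lambda>l. replicate (i l) 1 @ concat (replicate (j l) [0, 0])) [0..<k]))"
proof
  show "in_1_00_star w \<Longrightarrow> \<exists>k\<ge>1. \<exists>i j :: nat \<Rightarrow> nat.
     w = concat (map (\<lambda>l. replicate (i l) 1 @ concat (replicate (j l) [0, 0])) [0..<k])"
  proof (induction w rule: in_1_00_star.induct)
    case nil
    show ?case by (intro exI[of _ 1] conjI exI[of _ "\<lambda>_. 0"]) simp_all
  next
    case (one s)
    then obtain k i j where "k \<ge> 1"
      "s = concat (map (\<lambda>l. replicate (i l) 1 @ concat (replicate (j l) [0, 0])) [0..<k])"
      by blast
    then show ?case
      by (intro exI[of _ "Suc k"] conjI exI[of _ "case_nat 1 i"] exI[of _ "case_nat 0 j"])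
        (simp_all add: map_upt_Suc del: upt_Suc)
  next
    case (double_zero s)
    then obtain k i j where "k \<ge> 1"
      "s = concat (map (\<lambda>l. replicate (i l) 1 @ concat (replicate (j l) [0, 0])) [0..<k])"
      by blast
    then show ?case
      by (intro exI[of _ "Suc k"] conjI exI[of _ "case_nat 0 i"] exI[of _ "case_nat 1 j"])
        (simp_all add: map_upt_Suc del: upt_Suc)
  qed
next
  have "in_1_00_star (replicate n 1)" "in_1_00_star (concat (replicate n [0, 0]))" for n
    by (induction n) simp_all
  then show "\<exists>k\<ge>1. \<exists>i j :: nat \<Rightarrow> nat.
     w = concat (map (\<lambda>l. replicate (i l) 1 @ concat (replicate (j l) [0, 0])) [0..<k]) \<Longrightarrow>
     in_1_00_star w"
    by (auto intro!: in_1_00_star_concat in_1_00_star_append)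
qed

lemma J_set_eq_words_1_00: "J_set c = words_1_00 c"
  unfolding J_set_def words_1_00_def
  using in_1_00_star_iff_blocks in_1_00_star_binword by blast

lemma finite_words_1_00: "finite (words_1_00 n)"
proof (rule finite_subset)
  show "words_1_00 n \<subseteq> {w. set w \<subseteq> {0, 1} \<and> length w = n}"
    unfolding words_1_00_def using in_1_00_star_binword binword_def by blast
qed (simp add: finite_lists_length_eq)

lemma words_1_00_Suc_Suc:
  "words_1_00 (Suc (Suc n)) = (\<lambda>w. 1 # w) ` words_1_00 (Suc n) \<union> (\<lambda>w. 0 # 0 # w) ` words_1_00 n"
  unfolding words_1_00_def
  by (auto simp: in_1_00_star_Cons length_Suc_conv)

lemma card_words_1_00: "card (words_1_00 n) = fib (Suc n)"
proof (induction n rule: fib.induct)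
  case 1
  have "words_1_00 0 = {[]}" by (auto simp: words_1_00_def)
  then show ?case by simp
next
  case 2
  have "words_1_00 1 = {[1]}" by (auto simp: words_1_00_def in_1_00_star_Cons length_Suc_conv)
  then show ?case by simp
next
  case (3 n)
  have "card (words_1_00 (Suc (Suc n))) = card (words_1_00 (Suc n)) + card (words_1_00 n)"
    unfolding words_1_00_Suc_Suc
    by (subst card_Un_disjoint) (auto simp: finite_words_1_00 card_image inj_on_def)
  then show ?case using 3 by simp
qed

theorem proposition3:
  fixes c :: nat
  assumes "c \<ge> 1"
  shows "K_tilde c = J_set c \<union> {replicate c 0} \<and>
         card (K_tilde c) = fib (c + 1) + c mod 2"
proof -
  have "K_tilde c = {w. binword w \<and> length w = c \<and> (in_1_00_star w \<or> w = replicate c 0)}"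
    unfolding K_tilde_def using not_is_code_1_00_iff assms by force
  also have "\<dots> = words_1_00 c \<union> {replicate c 0}"
    using in_1_00_star_binword by (auto simp: words_1_00_def binword_def)
  finally have K_tilde_eq: "K_tilde c = words_1_00 c \<union> {replicate c 0}" .
  have "replicate c 0 \<in> words_1_00 c \<longleftrightarrow> even c"
    by (simp add: words_1_00_def in_1_00_star_replicate_zero_iff)
  then have "card (words_1_00 c \<union> {replicate c 0}) = card (words_1_00 c) + c mod 2"
    by (cases "even c") (simp_all add: finite_words_1_00 card_insert_if odd_iff_mod_2_eq_one)
  then show ?thesis
    using K_tilde_eq J_set_eq_words_1_00 card_words_1_00 by simp
qed

end
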